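(* Let $\alpha,\beta>0$ and $X\sim\mathsf{Beta}(\alpha,\beta)$. For every odd integer $d\ge 3$, the central moment $\mathbf{E}[(X-\mathbf{E}[X])^d]$ has the same sign as $\beta-\alpha$: it is positive if $\beta>\alpha$, negative if $\beta<\alpha$, and zero if $\beta=\alpha$.
   Context: $\mathsf{Beta}(\alpha,\beta)$ denotes the distribution on $[0,1]$ with density proportional to $x^{\alpha-1}(1-x)^{\beta-1}$. *)

theory Defs
  imports "HOL-Probability.Probability"
begin

text \<open>The density is taken zero outside
  the open interval (0,1) (the endpoints form a null set).\<close>
definition beta_density :: "real \<Rightarrow> real \<Rightarrow> real \<Rightarrow> ennreal" where
  "beta_density a b x =
     ennreal (indicator {0<..<1} x * x powr (a - 1) * (1 - x) powr (b - 1) / Beta a b)"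

end

theory Submission
  imports Defs "HOL-Computational_Algebra.Polynomial"
begin

text \<open>
  The moments of the Beta distribution satisfy
  \<open>(a + b + j) E[X^(j+1)] = (a + j) E[X^j]\<close>, which by linearity becomes the Stein identity
  \<open>E[((a + b) X - a) p(X)] = E[X (1 - X) p'(X)]\<close> for every polynomial \<open>p\<close>.
  With \<open>\<mu> = a / (a + b)\<close> and \<open>p = (x - \<mu>)^(n+1)\<close> it yields the recurrence
  \<open>(a + b + n + 1) m\<^sub>n\<^sub>+\<^sub>2 = (n + 1) (\<mu> (1 - \<mu>) m\<^sub>n + (1 - 2\<mu>) m\<^sub>n\<^sub>+\<^sub>1)\<close>
  for the central moments, starting from \<open>m\<^sub>0 = 1\<close> and \<open>m\<^sub>1 = 0\<close>.
  Induction then shows that all even central moments are positive and all odd ones from the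
  third on have the sign of \<open>1 - 2\<mu>\<close>, i.e. of \<open>b - a\<close>.
\<close>

lemma poly_pderiv_eq_sum:
  fixes p :: "'a::idom poly"
  shows "poly (pderiv p) x = (\<Sum>i\<le>degree p. coeff p i * (of_nat i * x ^ (i - 1)))"
proof -
  have "pderiv p = (\<Sum>i\<le>degree p. pderiv (monom (coeff p i) i))"
    using higher_pderiv_sum[of 1 "\<lambda>i. monom (coeff p i) i" "{..degree p}"]
    by (simp add: poly_as_sum_of_monoms)
  then show ?thesis
    by (simp add: pderiv_monom poly_sum poly_monom mult_ac)
qed

lemma (in finite_measure) integrable_continuous_AE_compact:
  fixes g :: "'b::topological_space \<Rightarrow> real"
  assumes "X \<in> borel_measurable M" and "AE \<omega> in M. X \<omega> \<in> K" and "compact K"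
    and "continuous_on UNIV g"
  shows "integrable M (\<lambda>\<omega>. g (X \<omega>))"
proof -
  have "compact (g ` K)"
    using assms(3,4) by (auto intro: compact_continuous_image continuous_on_subset)
  then obtain B where B: "\<And>y. y \<in> g ` K \<Longrightarrow> norm y \<le> B"
    by (meson bounded_iff compact_imp_bounded)
  have "g \<in> borel_measurable borel"
    using assms(4) by (rule borel_measurable_continuous_onI)
  moreover have "AE \<omega> in M. norm (g (X \<omega>)) \<le> B"
    using assms(2) by eventually_elim (use B in auto)
  ultimately show ?thesis
    using assms(1) by (intro integrable_const_bound[where B = B]) auto
qed

lemma sgn_odd_terms_of_recurrence:
  fixes m c :: "nat \<Rightarrow> real" and v s :: real
  assumes m0: "m 0 > 0" and m1: "m 1 = 0" and v: "v > 0" and c: "\<And>n. c n > 0"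
    and rec: "\<And>n. m (n + 2) = c n * (v * m n + s * m (n + 1))"
    and "n > 0"
  shows "sgn (m (2 * n + 1)) = sgn s"
proof -
  have "m (2 * n) > 0 \<and> (\<exists>q \<ge> 0. (n > 0 \<longrightarrow> q > 0) \<and> m (2 * n + 1) = s * q)"
  proof (induction n)
    case 0
    show ?case using m0 m1 by auto
  next
    case (Suc n)
    then obtain q where even: "m (2 * n) > 0" and q: "q \<ge> 0" and odd: "m (2 * n + 1) = s * q"
      by blast
    have "m (2 * Suc n) = c (2 * n) * (v * m (2 * n) + s\<^sup>2 * q)"
      using rec[of "2 * n"] odd by (simp add: power2_eq_square mult_ac)
    also have "\<dots> > 0"
      using c v even q by (intro mult_pos_pos add_pos_nonneg) auto
    finally have even': "m (2 * Suc n) > 0" .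
    have "m (2 * Suc n + 1) = s * (c (2 * n + 1) * (v * q + m (2 * Suc n)))"
      using rec[of "2 * n + 1"] odd by (simp add: algebra_simps)
    moreover have "c (2 * n + 1) * (v * q + m (2 * Suc n)) > 0"
      using c v q even' by (intro mult_pos_pos add_nonneg_pos) auto
    ultimately show ?case
      using even' by (intro conjI exI[of _ "c (2 * n + 1) * (v * q + m (2 * Suc n))"]) auto
  qed
  with \<open>n > 0\<close> show ?thesis
    by (auto simp: sgn_mult)
qed

lemma Beta_pos_real: "a > 0 \<Longrightarrow> b > 0 \<Longrightarrow> Beta a b > (0::real)"
  unfolding Beta_def by auto

definition beta_pdf :: "real \<Rightarrow> real \<Rightarrow> real \<Rightarrow> real" where
  "beta_pdf a b x = indicator {0<..<1} x * x powr (a - 1) * (1 - x) powr (b - 1) / Beta a b"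

lemma beta_density_eq: "beta_density a b = (\<lambda>x. ennreal (beta_pdf a b x))"
  by (simp add: fun_eq_iff beta_density_def beta_pdf_def)

lemma beta_pdf_mult_power:
  "beta_pdf a b x * x ^ j
     = indicator {0..1} x * (x powr (a + real j - 1) * (1 - x) powr (b - 1)) / Beta a b"
proof (cases "x \<in> {0<..<1}")
  case True
  then have "x ^ j * x powr (a - 1) = x powr (a + real j - 1)"
    by (simp add: powr_realpow[symmetric] powr_add[symmetric] algebra_simps)
  with True show ?thesis
    by (simp add: beta_pdf_def algebra_simps)
next
  case False
  then show ?thesis
    by (cases "x = 0 \<or> x = 1") (auto simp: beta_pdf_def)
qed

locale beta_distributed = prob_space M for M :: "'s measure" +
  fixes X :: "'s \<Rightarrow> real" and a b :: real
  assumes a_pos: "a > 0" and b_pos: "b > 0"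
    and distributed: "distributed M lborel X (beta_density a b)"
begin

definition central_moment :: "nat \<Rightarrow> real" where
  "central_moment k = expectation (\<lambda>\<omega>. (X \<omega> - expectation X) ^ k)"

lemma distributed_pdf: "distributed M lborel X (\<lambda>x. ennreal (beta_pdf a b x))"
  using distributed by (simp add: beta_density_eq)

lemma beta_pdf_nonneg: "beta_pdf a b x \<ge> 0"
  using Beta_pos_real[OF a_pos b_pos] by (simp add: beta_pdf_def)

lemma measurable_X [measurable]: "X \<in> borel_measurable M"
  using distributed_measurable[OF distributed_pdf] by simp

lemma AE_X_in_unit_interval: "AE \<omega> in M. X \<omega> \<in> {0..1}"
proof -
  have "AE x in density lborel (\<lambda>x. ennreal (beta_pdf a b x)). x \<in> {0..1}"
    by (subst AE_density) (auto simp: beta_pdf_def indicator_def)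
  then have "AE x in distr M lborel X. x \<in> {0..1}"
    by (subst distributed_distr_eq_density[OF distributed_pdf])
  then show ?thesis
    by (rule AE_distrD[rotated]) simp
qed

lemma integrable_continuous:
  fixes g :: "real \<Rightarrow> real"
  assumes "continuous_on UNIV g"
  shows "integrable M (\<lambda>\<omega>. g (X \<omega>))"
  using integrable_continuous_AE_compact[OF measurable_X AE_X_in_unit_interval compact_Icc assms] .

lemma moment: "expectation (\<lambda>\<omega>. X \<omega> ^ j) = Beta (a + real j) b / Beta a b"
proof -
  have aj: "a + real j > 0"
    using a_pos by simp
  have "expectation (\<lambda>\<omega>. X \<omega> ^ j) = (LINT x|lborel. beta_pdf a b x * x ^ j)"
    by (rule distributed_integral[OF distributed_pdf, symmetric]) (auto simp: beta_pdf_nonneg)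
  also have "\<dots> = (LINT x:{0..1}|lborel. x powr (a + real j - 1) * (1 - x) powr (b - 1)) / Beta a b"
    by (simp add: beta_pdf_mult_power set_lebesgue_integral_def)
  also have "(LINT x:{0..1}|lborel. x powr (a + real j - 1) * (1 - x) powr (b - 1))
      = integral {0..1} (\<lambda>x. x powr (a + real j - 1) * (1 - x) powr (b - 1))"
    using set_borel_integral_eq_integral(2)[OF integrable_Beta[OF aj b_pos]] .
  also have "\<dots> = Beta (a + real j) b"
    using has_integral_Beta_real[OF aj b_pos] by (rule integral_unique)
  finally show ?thesis .
qed

lemma moment_Suc:
  "(a + b + real j) * expectation (\<lambda>\<omega>. X \<omega> ^ Suc j) = (a + real j) * expectation (\<lambda>\<omega>. X \<omega> ^ j)"
proof -
  have "a + real j \<notin> \<int>\<^sub>\<le>\<^sub>0"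
    using a_pos by (auto elim!: nonpos_Ints_cases)
  from Beta_plus1_left[OF this, of b]
  have "(a + b + real j) * Beta (a + real j + 1) b = (a + real j) * Beta (a + real j) b"
    by (simp add: add_ac)
  then show ?thesis
    unfolding moment by (simp add: add_ac times_divide_eq_right)
qed

lemma expectation_X: "expectation X = a / (a + b)"
  using moment_Suc[of 0] a_pos b_pos by (simp add: field_simps prob_space)

lemma stein_identity_monomial:
  "expectation (\<lambda>\<omega>. ((a + b) * X \<omega> - a) * X \<omega> ^ j - X \<omega> * (1 - X \<omega>) * (real j * X \<omega> ^ (j - 1))) = 0"
proof -
  have "((a + b) * x - a) * x ^ j - x * (1 - x) * (real j * x ^ (j - 1))
      = (a + b + real j) * x ^ Suc j - (a + real j) * x ^ j" for x
    by (cases j) (simp_all add: algebra_simps)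
  then have "expectation (\<lambda>\<omega>. ((a + b) * X \<omega> - a) * X \<omega> ^ j - X \<omega> * (1 - X \<omega>) * (real j * X \<omega> ^ (j - 1)))
      = expectation (\<lambda>\<omega>. (a + b + real j) * X \<omega> ^ Suc j - (a + real j) * X \<omega> ^ j)"
    by presburger
  also have "\<dots> = (a + b + real j) * expectation (\<lambda>\<omega>. X \<omega> ^ Suc j) - (a + real j) * expectation (\<lambda>\<omega>. X \<omega> ^ j)"
    by (subst Bochner_Integration.integral_diff) (auto intro!: integrable_continuous continuous_intros)
  also have "\<dots> = 0"
    using moment_Suc[of j] by simp
  finally show ?thesis .
qed

theorem stein_identity:
  "expectation (\<lambda>\<omega>. ((a + b) * X \<omega> - a) * poly p (X \<omega>) - X \<omega> * (1 - X \<omega>) * poly (pderiv p) (X \<omega>)) = 0"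
proof -
  let ?S = "\<lambda>j x. ((a + b) * x - a) * x ^ j - x * (1 - x) * (real j * x ^ (j - 1))"
  have "((a + b) * x - a) * poly p x - x * (1 - x) * poly (pderiv p) x
      = (\<Sum>i\<le>degree p. coeff p i * ?S i x)" for x
    unfolding poly_altdef[of p] poly_pderiv_eq_sum sum_distrib_left sum_subtractf[symmetric]
    by (rule sum.cong) (simp_all add: algebra_simps)
  then have "expectation (\<lambda>\<omega>. ((a + b) * X \<omega> - a) * poly p (X \<omega>) - X \<omega> * (1 - X \<omega>) * poly (pderiv p) (X \<omega>))
      = expectation (\<lambda>\<omega>. \<Sum>i\<le>degree p. coeff p i * ?S i (X \<omega>))"
    by presburger
  also have "\<dots> = (\<Sum>i\<le>degree p. coeff p i * expectation (\<lambda>\<omega>. ?S i (X \<omega>)))"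
    by (subst Bochner_Integration.integral_sum) (auto intro!: integrable_continuous continuous_intros)
  also have "\<dots> = 0"
    by (simp only: stein_identity_monomial mult_zero_right sum.neutral_const)
  finally show ?thesis .
qed

lemma central_moment_recurrence:
  defines "\<mu> \<equiv> a / (a + b)"
  shows "central_moment (n + 2)
    = real (n + 1) / (a + b + real (n + 1))
      * (\<mu> * (1 - \<mu>) * central_moment n + (1 - 2 * \<mu>) * central_moment (n + 1))"
proof -
  let ?p = "[:-\<mu>, 1:] ^ Suc n"
  have ab: "a + b > 0"
    using a_pos b_pos by simp
  have "((a + b) * x - a) * poly ?p x - x * (1 - x) * poly (pderiv ?p) x
      = (a + b + real (n + 1)) * (x - \<mu>) ^ (n + 2) - real (n + 1) * (\<mu> * (1 - \<mu>)) * (x - \<mu>) ^ n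
        - real (n + 1) * (1 - 2 * \<mu>) * (x - \<mu>) ^ (n + 1)" (is "_ = ?rhs x") for x
  proof -
    have "poly ?p x = (x - \<mu>) ^ Suc n"
      by (simp del: power_Suc)
    moreover have "poly (pderiv ?p) x = real (Suc n) * (x - \<mu>) ^ n"
      by (simp only: pderiv_power_Suc) (simp add: pderiv_pCons del: power_Suc)
    moreover have "(a + b) * x - a = (a + b) * (x - \<mu>)"
      using ab by (simp add: \<mu>_def field_simps)
    moreover have "x * (1 - x) = \<mu> * (1 - \<mu>) + (1 - 2 * \<mu>) * (x - \<mu>) - (x - \<mu>)\<^sup>2"
      by (simp add: power2_eq_square algebra_simps)
    moreover have "(a + b) * y * y ^ Suc n - (\<mu> * (1 - \<mu>) + (1 - 2 * \<mu>) * y - y\<^sup>2) * (real (Suc n) * y ^ n)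
        = (a + b + real (n + 1)) * y ^ (n + 2) - real (n + 1) * (\<mu> * (1 - \<mu>)) * y ^ n
          - real (n + 1) * (1 - 2 * \<mu>) * y ^ (n + 1)" for y
      by (simp add: power2_eq_square algebra_simps)
    ultimately show ?thesis
      by (simp only:)
  qed
  then have "expectation (\<lambda>\<omega>. ?rhs (X \<omega>)) = 0"
    using stein_identity[of ?p] by simp
  moreover have "integrable M (\<lambda>\<omega>. (X \<omega> - \<mu>) ^ k)" for k
    by (auto intro!: integrable_continuous continuous_intros)
  ultimately have "(a + b + real (n + 1)) * central_moment (n + 2)
      - real (n + 1) * (\<mu> * (1 - \<mu>)) * central_moment n
      - real (n + 1) * (1 - 2 * \<mu>) * central_moment (n + 1) = 0"
    by (simp add: central_moment_def expectation_X \<mu>_def[symmetric] del: power_Suc)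
  with ab show ?thesis
    by (simp add: field_simps)
qed

lemma sgn_odd_central_moment:
  assumes "odd d" and "d \<ge> 3"
  shows "sgn (central_moment d) = sgn (b - a)"
proof -
  define \<mu> where "\<mu> = a / (a + b)"
  obtain n where d: "d = 2 * n + 1"
    using assms(1) by (rule oddE)
  with assms(2) have "n > 0"
    by simp
  have \<mu>_bounds: "0 < \<mu>" "\<mu> < 1"
    using a_pos b_pos by (simp_all add: \<mu>_def field_simps)
  have "integrable M X"
    using integrable_continuous[of "\<lambda>x. x"] by simp
  then have "central_moment 0 > 0" and "central_moment 1 = 0"
    by (simp_all add: central_moment_def prob_space)
  moreover have "\<mu> * (1 - \<mu>) > 0"
    using \<mu>_bounds by simp
  moreover have "real (k + 1) / (a + b + real (k + 1)) > 0" for k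
    using a_pos b_pos by simp
  moreover have "central_moment (k + 2) = real (k + 1) / (a + b + real (k + 1))
      * (\<mu> * (1 - \<mu>) * central_moment k + (1 - 2 * \<mu>) * central_moment (k + 1))" for k
    unfolding \<mu>_def by (rule central_moment_recurrence)
  ultimately have "sgn (central_moment d) = sgn (1 - 2 * \<mu>)"
    unfolding d using \<open>n > 0\<close> by (rule sgn_odd_terms_of_recurrence)
  also have "1 - 2 * \<mu> = (b - a) / (a + b)"
    using a_pos b_pos by (simp add: \<mu>_def field_simps)
  finally show ?thesis
    using a_pos b_pos by simp
qed

end

theorem mainTheorem4:
  fixes M :: "'s measure" and X :: "'s \<Rightarrow> real" and a b :: real and d :: nat
  assumes "prob_space M"
    and "a > 0" and "b > 0"
    and "distributed M lborel X (beta_density a b)"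
    and "odd d" and "d \<ge> 3"
  shows "sgn (prob_space.expectation M (\<lambda>\<omega>. (X \<omega> - prob_space.expectation M X) ^ d))
           = sgn (b - a)"
proof -
  interpret beta_distributed M X a b
    using assms(1-4) by (simp add: beta_distributed_def beta_distributed_axioms_def)
  show ?thesis
    using sgn_odd_central_moment[OF assms(5,6)] by (simp add: central_moment_def)
qed

end
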